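(* Let $\mathbb{F}$ be a field with $\mathrm{char}(\mathbb{F})\neq 2,3$. Then the automorphism group $\mathrm{Aut}(\hat{\mathcal{H}})$ is isomorphic to the infinite dihedral group $D$.
   Context: Notation: $\mathbb{N}=\{1,2,3,\dots\}$, $3\mathbb{N}=\{3,6,9,\dots\}$; for $r\in\mathbb{Z}$, $\bar r=r+3\mathbb{Z}\in\mathbb{Z}_3$. The algebra $\hat{\mathcal{H}}$ is the commutative $\mathbb{F}$-algebra with basis $\{a_i:i\in\mathbb{Z}\}\cup\{s_j:j\in\mathbb{N}\}\cup\{p_{\bar r,k}:\bar r\in\{\bar1,\bar2\},\ k\in 3\mathbb{N}\}$, where $s_0=0$, $p_{\bar r,j}=0$ for all $\bar r$ whenever $j\notin 3\mathbb{N}$, $p_{\bar 0,j}=-p_{\bar1,j}-p_{\bar2,j}$, $z_{\bar r,j}=p_{\bar r+\bar1,j}-p_{\bar r-\bar1,j}$, and for $i,i'\in\mathbb{Z}$, $j,l\in\mathbb{N}$, $h,k\in3\mathbb{N}$, $\bar r,\bar t\in\mathbb{Z}_3$: (H1) $a_ia_{i'}=\tfrac12(a_i+a_{i'})+s_{|i-i'|}+z_{\bar\imath,|i-i'|}$; (H2) $a_is_j=-\tfrac34a_i+\tfrac38(a_{i-j}+a_{i+j})+\tfrac32 s_j-z_{\bar\imath,j}$; (H3) $a_ip_{\bar r,k}=\tfrac32p_{\bar r,k}-p_{-(\bar\imath+\bar r),k}$; (H4) $s_js_l=\tfrac34(s_j+s_l)-\tfrac38(s_{|j-l|}+s_{j+l})$;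 (H5) $s_jp_{\bar r,k}=\tfrac34(p_{\bar r,j}+p_{\bar r,k})-\tfrac38(p_{\bar r,|j-k|}+p_{\bar r,j+k})$; (H6) $p_{\bar r,h}p_{\bar t,k}=\tfrac14(z_{-(\bar r+\bar t),h}+z_{-(\bar r+\bar t),k})-\tfrac18(z_{-(\bar r+\bar t),|h-k|}+z_{-(\bar r+\bar t),h+k})$. $D=\langle\tau_0,\tau_{1/2}\rangle$ is the infinite dihedral group generated by the reflections $\tau_0:i\mapsto -i$ and $\tau_{1/2}:i\mapsto 1-i$ of $\mathbb{Z}$. *)

theory Defs
  imports "HOL-Algebra.Bij" "HOL-Algebra.Generated_Groups" "HOL-Library.Function_Algebras"
begin

text \<open>Basis labels of the algebra hat-H: A i is a_i (i in Z), S j is s_j (j >= 1),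
  P r k is p_{r,k} (r in {1,2}, k in 3N).\<close>

datatype hidx = A int | S nat | P int nat

fun valid_idx :: "hidx \<Rightarrow> bool" where
  "valid_idx (A i) = True"
| "valid_idx (S j) = (j \<ge> 1)"
| "valid_idx (P r k) = (r \<in> {1, 2} \<and> 3 dvd k \<and> k > 0)"

definition hsupp :: "(hidx \<Rightarrow> 'a::field) \<Rightarrow> hidx set" where
  "hsupp v = {b. v b \<noteq> 0}"

definition Hcarrier :: "(hidx \<Rightarrow> 'a::field) set" where
  "Hcarrier = {v. finite (hsupp v) \<and> (\<forall>b\<in>hsupp v. valid_idx b)}"

definition evec :: "hidx \<Rightarrow> hidx \<Rightarrow> 'a::field" where
  "evec b = (\<lambda>c. if c = b then 1 else 0)"

definition vsc :: "'a::field \<Rightarrow> (hidx \<Rightarrow> 'a) \<Rightarrow> hidx \<Rightarrow> 'a" where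
  "vsc c v = (\<lambda>b. c * v b)"

definition aV :: "int \<Rightarrow> hidx \<Rightarrow> 'a::field" where
  "aV i = evec (A i)"

definition sV :: "nat \<Rightarrow> hidx \<Rightarrow> 'a::field" where
  "sV j = (if j = 0 then 0 else evec (S j))"

definition pV :: "int \<Rightarrow> nat \<Rightarrow> hidx \<Rightarrow> 'a::field" where
  "pV r j = (if 3 dvd j \<and> j > 0 then
      (if r mod 3 = 1 then evec (P 1 j)
       else if r mod 3 = 2 then evec (P 2 j)
       else - evec (P 1 j) - evec (P 2 j))
    else 0)"

definition zV :: "int \<Rightarrow> nat \<Rightarrow> hidx \<Rightarrow> 'a::field" where
  "zV r j = pV (r + 1) j - pV (r - 1) j"

definition nd :: "int \<Rightarrow> int \<Rightarrow> nat" where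
  "nd x y = nat \<bar>x - y\<bar>"

text \<open>Products of basis elements, (H1)-(H6), extended symmetrically.\<close>
fun bmul :: "hidx \<Rightarrow> hidx \<Rightarrow> hidx \<Rightarrow> 'a::field" where
  "bmul (A i) (A i') =
     vsc (1/2) (aV i + aV i') + sV (nd i i') + zV i (nd i i')"
| "bmul (A i) (S j) =
     vsc (-3/4) (aV i) + vsc (3/8) (aV (i - int j) + aV (i + int j)) + vsc (3/2) (sV j) - zV i j"
| "bmul (S j) (A i) =
     vsc (-3/4) (aV i) + vsc (3/8) (aV (i - int j) + aV (i + int j)) + vsc (3/2) (sV j) - zV i j"
| "bmul (A i) (P r k) = vsc (3/2) (pV r k) - pV (- (i + r)) k"
| "bmul (P r k) (A i) = vsc (3/2) (pV r k) - pV (- (i + r)) k"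
| "bmul (S j) (S l) =
     vsc (3/4) (sV j + sV l) - vsc (3/8) (sV (nd (int j) (int l)) + sV (j + l))"
| "bmul (S j) (P r k) =
     vsc (3/4) (pV r j + pV r k) - vsc (3/8) (pV r (nd (int j) (int k)) + pV r (j + k))"
| "bmul (P r k) (S j) =
     vsc (3/4) (pV r j + pV r k) - vsc (3/8) (pV r (nd (int j) (int k)) + pV r (j + k))"
| "bmul (P r h) (P t k) =
     vsc (1/4) (zV (- (r + t)) h + zV (- (r + t)) k)
     - vsc (1/8) (zV (- (r + t)) (nd (int h) (int k)) + zV (- (r + t)) (h + k))"

definition hmul :: "(hidx \<Rightarrow> 'a::field) \<Rightarrow> (hidx \<Rightarrow> 'a) \<Rightarrow> hidx \<Rightarrow> 'a" where
  "hmul x y = (\<lambda>c. \<Sum>b\<in>hsupp x. \<Sum>b'\<in>hsupp y. x b * y b' * bmul b b' c)"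

definition Hauts :: "((hidx \<Rightarrow> 'a::field) \<Rightarrow> (hidx \<Rightarrow> 'a)) set" where
  "Hauts = {\<phi>. \<phi> \<in> extensional Hcarrier \<and> bij_betw \<phi> Hcarrier Hcarrier
      \<and> (\<forall>x\<in>Hcarrier. \<forall>y\<in>Hcarrier. \<phi> (x + y) = \<phi> x + \<phi> y)
      \<and> (\<forall>c. \<forall>x\<in>Hcarrier. \<phi> (vsc c x) = vsc c (\<phi> x))
      \<and> (\<forall>x\<in>Hcarrier. \<forall>y\<in>Hcarrier. \<phi> (hmul x y) = hmul (\<phi> x) (\<phi> y))}"

definition HAutGroup :: "((hidx \<Rightarrow> 'a::field) \<Rightarrow> (hidx \<Rightarrow> 'a)) monoid" where
  "HAutGroup = BijGroup Hcarrier \<lparr>carrier := Hauts\<rparr>"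

definition tau0 :: "int \<Rightarrow> int" where "tau0 = (\<lambda>i. - i)"
definition tau_half :: "int \<Rightarrow> int" where "tau_half = (\<lambda>i. 1 - i)"

definition DGroup :: "(int \<Rightarrow> int) monoid" where
  "DGroup = BijGroup (UNIV :: int set)
     \<lparr>carrier := generate (BijGroup (UNIV :: int set)) {tau0, tau_half}\<rparr>"

end

(*
  The nonzero idempotents of hat-H are exactly the a_i: if the support of an idempotent x is not a
  single a_i, then some label outside that support (a_{M+N}, s_{2N}, s_{M-m} or p_{t,2K}, built
  from extremal indices of x) gets a coefficient in x x that is nonzero because char F <> 2, 3
  (for p_{t,2K}: two quadratic forms in the top p-coefficients have only the trivial common zero),
  contradicting x x = x. Hence an
  automorphism phi permutes the a_i, say phi(a_i) = a_{g(i)}. Applying phi to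
  a_i a_{i+1} = 1/2 (a_i + a_{i+1}) + s_1 shows that phi(s_1) = s_d + z_{g(i),d} with
  d = |g(i) - g(i+1)|, so d does not depend on i, and a bijection of Z moving all neighbours by the
  same distance is i |-> c + i or i |-> c - i. As 3 is invertible, the a_i generate hat-H, so phi
  is determined by g; conversely every such g is induced by the automorphism a_i |-> a_{g(i)},
  s_j |-> s_j, p_{r,k} |-> e p_{c+er,k} (e = +-1). The maps c +- i form the group generated by
  tau_0 and tau_{1/2}.
*)
theory Submission
  imports Defs
begin

lemma sum_fun_apply: "(\<Sum>i\<in>I. f i) x = (\<Sum>i\<in>I. f i x)"
  by (induct I rule: infinite_finite_induct) auto

lemma vsc_apply [simp]: "vsc c v b = c * v b" by (simp add: vsc_def)
lemma evec_apply [simp]: "evec b c = (if c = b then 1 else 0)" by (simp add: evec_def)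
lemma aV_apply [simp]: "aV i b = (if b = A i then 1 else 0)" by (simp add: aV_def)
lemma sV_apply [simp]: "sV j b = (if j \<noteq> 0 \<and> b = S j then 1 else 0)" by (simp add: sV_def)

lemma vsc_vsc [simp]: "vsc a (vsc b x) = vsc (a * b) x" by (simp add: fun_eq_iff)
lemma vsc_one [simp]: "vsc 1 x = x" by (simp add: fun_eq_iff)
lemma vsc_zero [simp]: "vsc c 0 = 0" by (simp add: fun_eq_iff)
lemma vsc_diff: "vsc a (x - y) = vsc a x - vsc a y" by (simp add: fun_eq_iff algebra_simps)

lemma vsc_minus_one: "- x = vsc (-1) x" by (simp add: fun_eq_iff)
lemma diff_eq_add_vsc: "x - y = x + vsc (-1) y" by (simp add: fun_eq_iff)

lemma hsupp_evec: "hsupp (evec b :: hidx \<Rightarrow> 'a::field) = {b}" by (auto simp: hsupp_def)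
lemma hsupp_zero [simp]: "hsupp 0 = {}" by (simp add: hsupp_def)
lemma hsupp_add: "hsupp (x + y) \<subseteq> hsupp x \<union> hsupp y" by (auto simp: hsupp_def)
lemma hsupp_vsc: "hsupp (vsc c x) \<subseteq> hsupp x" by (auto simp: hsupp_def)

subsection \<open>The carrier as a vector space\<close>

lemma HcarrierI: "finite (hsupp v) \<Longrightarrow> (\<And>b. v b \<noteq> 0 \<Longrightarrow> valid_idx b) \<Longrightarrow> v \<in> Hcarrier"
  by (auto simp: Hcarrier_def hsupp_def)

lemma HcarrierD:
  "v \<in> Hcarrier \<Longrightarrow> finite (hsupp v)" "v \<in> Hcarrier \<Longrightarrow> v b \<noteq> 0 \<Longrightarrow> valid_idx b"
  by (auto simp: Hcarrier_def hsupp_def)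

lemma Hcarrier_add [simp]: "x \<in> Hcarrier \<Longrightarrow> y \<in> Hcarrier \<Longrightarrow> x + y \<in> Hcarrier"
  by (rule HcarrierI)
    (auto intro: finite_subset[OF hsupp_add] HcarrierD(1), metis HcarrierD(2) add.right_neutral add_0)

lemma Hcarrier_vsc [simp]: "x \<in> Hcarrier \<Longrightarrow> vsc c x \<in> Hcarrier"
  by (rule HcarrierI) (auto intro: finite_subset[OF hsupp_vsc] HcarrierD)

lemma Hcarrier_uminus [simp]: "x \<in> Hcarrier \<Longrightarrow> - x \<in> Hcarrier"
  by (simp add: vsc_minus_one)

lemma Hcarrier_diff [simp]: "x \<in> Hcarrier \<Longrightarrow> y \<in> Hcarrier \<Longrightarrow> x - y \<in> Hcarrier"
  using Hcarrier_add[of x "- y"] by simp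

lemma Hcarrier_zero [simp]: "(0 :: hidx \<Rightarrow> 'a::field) \<in> Hcarrier"
  by (rule HcarrierI) (auto simp: hsupp_def)

lemma Hcarrier_sum [simp]: "(\<And>i. i \<in> I \<Longrightarrow> f i \<in> Hcarrier) \<Longrightarrow> sum f I \<in> Hcarrier"
  by (induct I rule: infinite_finite_induct) auto

lemma Hcarrier_evec [simp]: "valid_idx b \<Longrightarrow> (evec b :: hidx \<Rightarrow> 'a::field) \<in> Hcarrier"
  by (rule HcarrierI) (auto simp: hsupp_evec split: if_splits)

lemma Hcarrier_aV [simp]: "aV i \<in> Hcarrier" unfolding aV_def by simp
lemma Hcarrier_sV [simp]: "sV j \<in> Hcarrier" unfolding sV_def by simp
lemma Hcarrier_pV [simp]: "pV r j \<in> Hcarrier" unfolding pV_def by simp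
lemma Hcarrier_zV [simp]: "zV r j \<in> Hcarrier" unfolding zV_def by simp

lemma Hcarrier_bmul [simp]: "bmul b b' \<in> Hcarrier"
  by (cases b; cases b') simp_all

lemma basis_expansion:
  assumes "finite F" "hsupp v \<subseteq> F"
  shows "v = (\<Sum>b\<in>F. vsc (v b) (evec b))"
proof (rule ext)
  fix c
  have "(\<Sum>b\<in>F. vsc (v b) (evec b)) c = (\<Sum>b\<in>F. if c = b then v b else 0)"
    by (auto simp: sum_fun_apply intro!: sum.cong)
  also have "\<dots> = v c" using assms by (auto simp: hsupp_def)
  finally show "v c = (\<Sum>b\<in>F. vsc (v b) (evec b)) c" by simp
qed

lemma finite_coeffs:
  assumes "x \<in> Hcarrier" "inj f"
  shows "finite {n. x (f n) \<noteq> 0}"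
proof -
  have "finite (f -` hsupp x)" using assms by (intro finite_vimageI HcarrierD(1)) (auto intro: inj_on_subset)
  then show ?thesis by (simp add: hsupp_def vimage_def)
qed

subsection \<open>Bilinearity and commutativity of the product\<close>

lemma hmul_apply:
  assumes "finite F" "hsupp x \<subseteq> F" "finite G" "hsupp y \<subseteq> G"
  shows "hmul x y c = (\<Sum>b\<in>F. \<Sum>b'\<in>G. x b * y b' * bmul b b' c)"
proof -
  have "hmul x y c = (\<Sum>b\<in>hsupp x. \<Sum>b'\<in>G. x b * y b' * bmul b b' c)"
    unfolding hmul_def
    by (intro sum.cong refl sum.mono_neutral_left[OF assms(3,4)]) (auto simp: hsupp_def)
  also have "\<dots> = (\<Sum>b\<in>F. \<Sum>b'\<in>G. x b * y b' * bmul b b' c)"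
    by (intro sum.mono_neutral_left[OF assms(1,2)]) (auto simp: hsupp_def)
  finally show ?thesis .
qed

lemma hmul_eq_sum:
  assumes "finite F" "hsupp x \<subseteq> F" "finite G" "hsupp y \<subseteq> G"
  shows "hmul x y = (\<Sum>b\<in>F. \<Sum>b'\<in>G. vsc (x b * y b') (bmul b b'))"
  using hmul_apply[OF assms] by (simp add: fun_eq_iff sum_fun_apply)

lemma Hcarrier_hmul [simp]: "x \<in> Hcarrier \<Longrightarrow> y \<in> Hcarrier \<Longrightarrow> hmul x y \<in> Hcarrier"
  by (simp add: hmul_eq_sum[OF HcarrierD(1) order_refl HcarrierD(1) order_refl])

lemma hmul_evec: "hmul (evec b) (evec b') = (bmul b b' :: hidx \<Rightarrow> 'a::field)"
  by (simp add: hmul_eq_sum[of "{b}" _ "{b'}"] hsupp_evec)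

lemma hmul_add_left:
  assumes "x \<in> Hcarrier" "y \<in> Hcarrier" "z \<in> Hcarrier"
  shows "hmul (x + y) z = hmul x z + hmul y z"
proof (rule ext)
  fix c
  have F: "finite (hsupp x \<union> hsupp y)" "finite (hsupp z)" using assms HcarrierD(1) by auto
  show "hmul (x + y) z c = (hmul x z + hmul y z) c"
    using hsupp_add[of x y]
    by (simp add: hmul_apply[OF F(1) _ F(2) order_refl] sum.distrib[symmetric] distrib_right)
qed

lemma hmul_vsc_left:
  assumes "x \<in> Hcarrier" "z \<in> Hcarrier"
  shows "hmul (vsc c x) z = vsc c (hmul x z)"
proof (rule ext)
  fix d
  have F: "finite (hsupp x)" "finite (hsupp z)" using assms HcarrierD(1) by auto
  show "hmul (vsc c x) z d = vsc c (hmul x z) d"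
    using hsupp_vsc[of c x] by (simp add: hmul_apply[OF F(1) _ F(2) order_refl] sum_distrib_left mult.assoc)
qed

lemma nd_commute: "nd i i' = nd i' i" by (simp add: nd_def)

lemma pV_mod3: "r mod 3 = r' mod 3 \<Longrightarrow> pV r k = pV r' k"
  by (simp add: pV_def)

lemma zV_mod3: "r mod 3 = r' mod 3 \<Longrightarrow> zV r k = zV r' k"
  unfolding zV_def by (metis mod_add_left_eq mod_diff_left_eq pV_mod3)

text \<open>z_{i,|i-i'|} vanishes unless 3 divides i - i', and then z_i = z_{i'}.\<close>
lemma zV_nd_commute: "zV i (nd i i') = zV i' (nd i i')"
proof (cases "3 dvd nd i i'")
  case True
  then have "int 3 dvd \<bar>i - i'\<bar>" unfolding nd_def by (metis abs_ge_zero int_nat_eq of_nat_dvd_iff)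
  then have "i mod 3 = i' mod 3" by (simp add: mod_eq_dvd_iff)
  then show ?thesis by (rule zV_mod3)
qed (simp add: zV_def pV_def)

lemma bmul_commute: "bmul b b' = bmul b' b"
proof (cases b; cases b')
  fix i i' assume "b = A i" "b' = A i'"
  then show ?thesis using zV_nd_commute[of i i'] by (simp add: nd_commute[of i'] add.commute)
qed (simp_all add: nd_commute add.commute)

lemma hmul_commute:
  assumes "x \<in> Hcarrier" "y \<in> Hcarrier"
  shows "hmul x y = hmul y x"
proof (rule ext)
  fix c
  have F: "finite (hsupp x)" "finite (hsupp y)" using assms HcarrierD(1) by auto
  show "hmul x y c = hmul y x c"
    unfolding hmul_apply[OF F(1) order_refl F(2) order_refl] hmul_apply[OF F(2) order_refl F(1) order_refl]
    by (subst sum.swap) (simp add: bmul_commute mult_ac)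
qed

lemma hmul_add_right:
  "x \<in> Hcarrier \<Longrightarrow> y \<in> Hcarrier \<Longrightarrow> z \<in> Hcarrier \<Longrightarrow> hmul z (x + y) = hmul z x + hmul z y"
  by (metis Hcarrier_add hmul_add_left hmul_commute)

lemma hmul_vsc_right:
  "x \<in> Hcarrier \<Longrightarrow> z \<in> Hcarrier \<Longrightarrow> hmul z (vsc c x) = vsc c (hmul z x)"
  by (metis Hcarrier_vsc hmul_vsc_left hmul_commute)

lemma hmul_zero_left [simp]: "hmul 0 y = 0" by (simp add: hmul_def fun_eq_iff)
lemma hmul_zero_right [simp]: "hmul y 0 = 0" by (simp add: hmul_def fun_eq_iff)

lemma hmul_sum_left:
  assumes "finite I" "\<And>i. i \<in> I \<Longrightarrow> f i \<in> Hcarrier" "y \<in> Hcarrier"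
  shows "hmul (sum f I) y = (\<Sum>i\<in>I. hmul (f i) y)"
  using assms by (induct I rule: finite_induct) (simp_all add: hmul_add_left)

lemma hmul_sum_right:
  assumes "finite I" "\<And>i. i \<in> I \<Longrightarrow> f i \<in> Hcarrier" "y \<in> Hcarrier"
  shows "hmul y (sum f I) = (\<Sum>i\<in>I. hmul y (f i))"
  using assms by (simp add: hmul_commute[of y] hmul_sum_left)

lemma hmul_linear_combinations:
  assumes "finite F" "finite G" "\<And>b. b \<in> F \<Longrightarrow> u b \<in> Hcarrier" "\<And>b. b \<in> G \<Longrightarrow> w b \<in> Hcarrier"
  shows "hmul (\<Sum>b\<in>F. vsc (x b) (u b)) (\<Sum>b'\<in>G. vsc (y b') (w b')) =
    (\<Sum>b\<in>F. \<Sum>b'\<in>G. vsc (x b * y b') (hmul (u b) (w b')))"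
proof -
  have "hmul (\<Sum>b\<in>F. vsc (x b) (u b)) (\<Sum>b'\<in>G. vsc (y b') (w b')) =
      (\<Sum>b\<in>F. \<Sum>b'\<in>G. hmul (vsc (x b) (u b)) (vsc (y b') (w b')))"
    using assms by (simp add: hmul_sum_left hmul_sum_right) (rule sum.swap)
  also have "\<dots> = (\<Sum>b\<in>F. \<Sum>b'\<in>G. vsc (x b * y b') (hmul (u b) (w b')))"
    using assms by (intro sum.cong refl) (simp add: hmul_vsc_left hmul_vsc_right mult.commute)
  finally show ?thesis .
qed

subsection \<open>Linear maps\<close>

definition Hlinear :: "((hidx \<Rightarrow> 'a::field) \<Rightarrow> (hidx \<Rightarrow> 'a)) \<Rightarrow> bool" where
  "Hlinear \<phi> \<longleftrightarrow> (\<forall>x\<in>Hcarrier. \<forall>y\<in>Hcarrier. \<phi> (x + y) = \<phi> x + \<phi> y)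
     \<and> (\<forall>c. \<forall>x\<in>Hcarrier. \<phi> (vsc c x) = vsc c (\<phi> x))"

lemma Hlinear_add: "Hlinear \<phi> \<Longrightarrow> x \<in> Hcarrier \<Longrightarrow> y \<in> Hcarrier \<Longrightarrow> \<phi> (x + y) = \<phi> x + \<phi> y"
  by (simp add: Hlinear_def)

lemma Hlinear_vsc: "Hlinear \<phi> \<Longrightarrow> x \<in> Hcarrier \<Longrightarrow> \<phi> (vsc c x) = vsc c (\<phi> x)"
  by (simp add: Hlinear_def)

lemma Hlinear_zero: "Hlinear \<phi> \<Longrightarrow> \<phi> 0 = 0"
proof -
  assume "Hlinear \<phi>"
  moreover have vsc_0: "vsc 0 x = 0" for x :: "hidx \<Rightarrow> 'a" by (simp add: fun_eq_iff)
  ultimately have "\<phi> 0 = vsc 0 (\<phi> 0)" using Hlinear_vsc[of \<phi> 0 0] by (simp only: Hcarrier_zero)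
  then show ?thesis by (simp only: vsc_0)
qed

lemma Hlinear_diff: "Hlinear \<phi> \<Longrightarrow> x \<in> Hcarrier \<Longrightarrow> y \<in> Hcarrier \<Longrightarrow> \<phi> (x - y) = \<phi> x - \<phi> y"
  by (simp add: diff_eq_add_vsc Hlinear_add Hlinear_vsc) (simp add: fun_eq_iff)

lemma Hlinear_sum:
  assumes "Hlinear \<phi>" "\<And>i. i \<in> I \<Longrightarrow> f i \<in> Hcarrier"
  shows "\<phi> (sum f I) = (\<Sum>i\<in>I. \<phi> (f i))"
  using assms(2)
  by (induct I rule: infinite_finite_induct) (simp_all add: Hlinear_zero[OF assms(1)] Hlinear_add[OF assms(1)])

lemma Hlinear_comp:
  "Hlinear \<phi> \<Longrightarrow> Hlinear \<psi> \<Longrightarrow> (\<And>x. x \<in> Hcarrier \<Longrightarrow> \<psi> x \<in> Hcarrier) \<Longrightarrow> Hlinear (\<phi> \<circ> \<psi>)"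
  by (simp add: Hlinear_def)

lemma Hlinear_id: "Hlinear id"
  by (simp add: Hlinear_def)

lemma Hlinear_basis_expansion:
  assumes "Hlinear \<phi>" "v \<in> Hcarrier"
  shows "\<phi> v = (\<Sum>b\<in>hsupp v. vsc (v b) (\<phi> (evec b)))"
proof -
  have valid: "\<And>b. b \<in> hsupp v \<Longrightarrow> valid_idx b" using assms(2) HcarrierD(2) by (auto simp: hsupp_def)
  have "\<phi> v = \<phi> (\<Sum>b\<in>hsupp v. vsc (v b) (evec b))"
    using basis_expansion[OF HcarrierD(1)[OF assms(2)] order_refl] by simp
  also have "\<dots> = (\<Sum>b\<in>hsupp v. vsc (v b) (\<phi> (evec b)))"
    using valid by (simp add: Hlinear_sum[OF assms(1)] Hlinear_vsc[OF assms(1)])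
  finally show ?thesis .
qed

lemma Hlinear_eqI:
  assumes "Hlinear \<phi>" "Hlinear \<psi>" "\<And>b. valid_idx b \<Longrightarrow> \<phi> (evec b) = \<psi> (evec b)" "v \<in> Hcarrier"
  shows "\<phi> v = \<psi> v"
  using assms(3,4) HcarrierD(2)[OF assms(4)]
  by (simp add: Hlinear_basis_expansion[OF assms(1,4)] Hlinear_basis_expansion[OF assms(2,4)] hsupp_def)

lemma Hlinear_hmulI:
  assumes "Hlinear \<phi>" "\<And>x. x \<in> Hcarrier \<Longrightarrow> \<phi> x \<in> Hcarrier"
    and "\<And>b b'. valid_idx b \<Longrightarrow> valid_idx b' \<Longrightarrow> \<phi> (bmul b b') = hmul (\<phi> (evec b)) (\<phi> (evec b'))"
    and x: "x \<in> Hcarrier" and y: "y \<in> Hcarrier"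
  shows "\<phi> (hmul x y) = hmul (\<phi> x) (\<phi> y)"
proof -
  have F: "finite (hsupp x)" "finite (hsupp y)" using x y HcarrierD(1) by auto
  have valid: "\<And>b. b \<in> hsupp x \<Longrightarrow> valid_idx b" "\<And>b. b \<in> hsupp y \<Longrightarrow> valid_idx b"
    using x y HcarrierD(2) by (auto simp: hsupp_def)
  have "\<phi> (hmul x y) = (\<Sum>b\<in>hsupp x. \<Sum>b'\<in>hsupp y. vsc (x b * y b') (\<phi> (bmul b b')))"
    by (simp add: hmul_eq_sum[OF F(1) order_refl F(2) order_refl] Hlinear_sum[OF assms(1)]
        Hlinear_vsc[OF assms(1)])
  also have "\<dots> = (\<Sum>b\<in>hsupp x. \<Sum>b'\<in>hsupp y. vsc (x b * y b') (hmul (\<phi> (evec b)) (\<phi> (evec b'))))"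
    using valid assms(3) by simp
  also have "\<dots> = hmul (\<Sum>b\<in>hsupp x. vsc (x b) (\<phi> (evec b))) (\<Sum>b'\<in>hsupp y. vsc (y b') (\<phi> (evec b')))"
    using valid assms(2) by (intro hmul_linear_combinations[symmetric] F) auto
  also have "\<dots> = hmul (\<phi> x) (\<phi> y)"
    by (simp add: Hlinear_basis_expansion[OF assms(1) x] Hlinear_basis_expansion[OF assms(1) y])
  finally show ?thesis .
qed

definition lin_ext :: "(hidx \<Rightarrow> hidx \<Rightarrow> 'a::field) \<Rightarrow> (hidx \<Rightarrow> 'a) \<Rightarrow> hidx \<Rightarrow> 'a" where
  "lin_ext f = (\<lambda>v\<in>Hcarrier. \<Sum>b\<in>hsupp v. vsc (v b) (f b))"

lemma lin_ext_eq:
  assumes "v \<in> Hcarrier" "finite F" "hsupp v \<subseteq> F"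
  shows "lin_ext f v = (\<Sum>b\<in>F. vsc (v b) (f b))"
  unfolding lin_ext_def using assms(1)
  by (simp, intro sum.mono_neutral_left[OF assms(2,3)]) (auto simp: hsupp_def fun_eq_iff)

lemma lin_ext_evec: "valid_idx b \<Longrightarrow> lin_ext f (evec b) = f b"
  by (simp add: lin_ext_eq[OF _ _ order_refl] hsupp_evec)

lemma Hcarrier_lin_ext:
  assumes "\<And>b. valid_idx b \<Longrightarrow> f b \<in> Hcarrier" "v \<in> Hcarrier"
  shows "lin_ext f v \<in> Hcarrier"
proof -
  have "\<And>b. b \<in> hsupp v \<Longrightarrow> valid_idx b" using assms(2) HcarrierD(2) by (auto simp: hsupp_def)
  then show ?thesis using assms by (simp add: lin_ext_eq[OF _ HcarrierD(1) order_refl])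
qed

lemma Hlinear_lin_ext: "Hlinear (lin_ext f)"
  unfolding Hlinear_def
proof (intro conjI ballI allI)
  fix x y :: "hidx \<Rightarrow> 'a" assume xy: "x \<in> Hcarrier" "y \<in> Hcarrier"
  have F: "finite (hsupp x \<union> hsupp y)" using xy HcarrierD(1) by auto
  from xy hsupp_add[of x y] show "lin_ext f (x + y) = lin_ext f x + lin_ext f y"
    by (simp add: lin_ext_eq[OF _ F] sum.distrib[symmetric] fun_eq_iff sum_fun_apply distrib_right)
next
  fix c and x :: "hidx \<Rightarrow> 'a" assume x: "x \<in> Hcarrier"
  have F: "finite (hsupp x)" using x HcarrierD(1) by auto
  from x hsupp_vsc[of c x] show "lin_ext f (vsc c x) = vsc c (lin_ext f x)"
    by (simp add: lin_ext_eq[OF _ F] fun_eq_iff sum_fun_apply sum_distrib_left mult.assoc)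
qed

subsection \<open>The relations (H3)-(H6) for arbitrary residues\<close>

text \<open>Coordinates of p_{r,k} in the basis p_{1,k}, p_{2,k}.\<close>
definition pcoeff :: "int \<Rightarrow> int \<Rightarrow> 'a::field" where
  "pcoeff r t = (if t \<in> {1, 2} then (if r mod 3 = t then 1 else if r mod 3 = 0 then -1 else 0) else 0)"

lemma pV_apply [simp]:
  "pV r j (A i) = 0" "pV r j (S l) = 0"
  "pV r j (P t m) = (if 3 dvd j \<and> 0 < j \<and> m = j then pcoeff r t else 0)"
  by (auto simp: pV_def pcoeff_def)

lemma zV_apply [simp]:
  "zV r j (A i) = 0" "zV r j (S l) = 0"
  "zV r j (P t m) = (if 3 dvd j \<and> 0 < j \<and> m = j then pcoeff (r + 1) t - pcoeff (r - 1) t else 0)"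
  by (auto simp: zV_def)

lemma pcoeff_mod3: "r mod 3 = r' mod 3 \<Longrightarrow> pcoeff r t = pcoeff r' t"
  by (simp add: pcoeff_def)

lemma mod3_cases: "(x::int) mod 3 = 0 \<or> x mod 3 = 1 \<or> x mod 3 = 2" by presburger

text \<open>Since p_{0,k} + p_{1,k} + p_{2,k} = 0, the map r \<mapsto> p_{r,k} is affine on Z_3, hence compatible
  with every affine bijection r \<mapsto> c + e r of Z_3.\<close>
lemma pcoeff_affine:
  assumes "e \<in> {1, -1}"
  shows "(pcoeff (c + e * r) t :: 'a::field) = pcoeff r 1 * pcoeff (c + e) t + pcoeff r 2 * pcoeff (c + 2 * e) t"
proof -
  have m: "(c + e * r) mod 3 = (c mod 3 + e * (r mod 3)) mod 3"
    by (metis mod_add_left_eq mod_add_right_eq mod_mult_right_eq)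
  have "pcoeff (c + e * r) t = (pcoeff (c mod 3 + e * (r mod 3)) t :: 'a)"
    "pcoeff (c + e) t = (pcoeff (c mod 3 + e) t :: 'a)" "pcoeff (c + 2 * e) t = (pcoeff (c mod 3 + 2 * e) t :: 'a)"
    "pcoeff r 1 = (pcoeff (r mod 3) 1 :: 'a)" "pcoeff r 2 = (pcoeff (r mod 3) 2 :: 'a)"
    by (rule pcoeff_mod3; (rule m)?; simp add: mod_simps)+
  then show ?thesis using mod3_cases[of c] mod3_cases[of r] assms by (elim disjE insertE; simp add: pcoeff_def)
qed

lemma pV_affine:
  assumes "e \<in> {1, -1}"
  shows "(pV (c + e * r) k :: hidx \<Rightarrow> 'a::field) = vsc (pcoeff r 1) (pV (c + e) k) + vsc (pcoeff r 2) (pV (c + 2 * e) k)"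
  by (rule ext, case_tac x) (auto simp: pcoeff_affine[OF assms])

lemma pV_expand: "(pV r k :: hidx \<Rightarrow> 'a::field) = vsc (pcoeff r 1) (pV 1 k) + vsc (pcoeff r 2) (pV 2 k)"
  using pV_affine[of 1 0 r k] by simp

lemma pV_minus_expand: "(pV (d - r) k :: hidx \<Rightarrow> 'a::field) = vsc (pcoeff r 1) (pV (d - 1) k) + vsc (pcoeff r 2) (pV (d - 2) k)"
  using pV_affine[of "-1" d r k] by simp

lemma pV_minus_sum_expand:
  "(pV (d - (r + t)) k :: hidx \<Rightarrow> 'a::field) =
     vsc (pcoeff r 1 * pcoeff t 1) (pV (d - 2) k)
   + vsc (pcoeff r 1 * pcoeff t 2 + pcoeff r 2 * pcoeff t 1) (pV (d - 3) k)
   + vsc (pcoeff r 2 * pcoeff t 2) (pV (d - 4) k)"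
proof -
  have "(pV (d - (r + t)) k :: hidx \<Rightarrow> 'a) = pV ((d - t) - r) k" by (simp add: algebra_simps)
  also have "\<dots> = vsc (pcoeff r 1) (pV ((d - 1) - t) k) + vsc (pcoeff r 2) (pV ((d - 2) - t) k)"
    unfolding pV_minus_expand[of "d - t" r] by (simp add: algebra_simps)
  also have "\<dots> = vsc (pcoeff r 1 * pcoeff t 1) (pV (d - 2) k)
   + vsc (pcoeff r 1 * pcoeff t 2 + pcoeff r 2 * pcoeff t 1) (pV (d - 3) k)
   + vsc (pcoeff r 2 * pcoeff t 2) (pV (d - 4) k)"
    unfolding pV_minus_expand[of "d - 1" t] pV_minus_expand[of "d - 2" t] by (simp add: fun_eq_iff algebra_simps)
  finally show ?thesis .
qed

lemma zV_minus_sum_expand: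
  "(zV (- (r + t)) k :: hidx \<Rightarrow> 'a::field) =
     vsc (pcoeff r 1 * pcoeff t 1) (zV (-2) k)
   + vsc (pcoeff r 1 * pcoeff t 2 + pcoeff r 2 * pcoeff t 1) (zV (-3) k)
   + vsc (pcoeff r 2 * pcoeff t 2) (zV (-4) k)"
proof -
  have "- (r + t) + 1 = 1 - (r + t)" "- (r + t) - 1 = -1 - (r + t)" by simp_all
  then show ?thesis
    unfolding zV_def by (simp only: pV_minus_sum_expand) (simp add: fun_eq_iff algebra_simps)
qed

lemma pV_eq_0: "\<not> (3 dvd k \<and> 0 < k) \<Longrightarrow> pV r k = 0"
  by (auto simp: pV_def)

lemma pV_eq_evec: "r \<in> {1, 2} \<Longrightarrow> 3 dvd k \<Longrightarrow> 0 < k \<Longrightarrow> pV r k = evec (P r k)"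
  by (auto simp: pV_def)

lemma pV_basis_expansion:
  "3 dvd k \<Longrightarrow> 0 < k \<Longrightarrow>
   (pV r k :: hidx \<Rightarrow> 'a::field) = vsc (pcoeff r 1) (evec (P 1 k)) + vsc (pcoeff r 2) (evec (P 2 k))"
  by (rule ext, case_tac x) (auto simp: pcoeff_def)

lemma hmul_aV_aV: "hmul (aV i) (aV i') = bmul (A i) (A i')"
  by (simp only: aV_def hmul_evec)

lemma hmul_aV_sV: "0 < j \<Longrightarrow> hmul (aV i) (sV j) = bmul (A i) (S j)"
  by (simp add: aV_def sV_def hmul_evec)

lemma hmul_sV_sV: "0 < j \<Longrightarrow> 0 < l \<Longrightarrow> hmul (sV j) (sV l) = bmul (S j) (S l)"
  by (simp add: sV_def hmul_evec)

lemma hmul_aV_pV: "hmul (aV i) (pV r k) = (vsc (3/2) (pV r k) - pV (- (i + r)) k :: hidx \<Rightarrow> 'a::field)"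
proof (cases "3 dvd k \<and> 0 < k")
  case True
  then have "hmul (aV i) (pV r k) =
      (vsc (pcoeff r 1) (bmul (A i) (P 1 k)) + vsc (pcoeff r 2) (bmul (A i) (P 2 k)) :: hidx \<Rightarrow> 'a)"
    by (simp add: pV_basis_expansion[of k r] hmul_add_right hmul_vsc_right) (simp add: aV_def hmul_evec)
  also have "\<dots> = vsc (3/2) (pV r k) - pV (- (i + r)) k"
  proof -
    have neg: "- (i + s) = - i - s" for s :: int by simp
    have "pV (- (i + r)) k = vsc (pcoeff r 1) (pV (- (i + 1)) k) + vsc (pcoeff r 2) (pV (- (i + 2)) k)"
      unfolding neg by (rule pV_minus_expand)
    then show ?thesis unfolding pV_expand[of r k] by (simp add: fun_eq_iff algebra_simps)
  qed
  finally show ?thesis .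
next
  case False
  then show ?thesis by (simp add: pV_eq_0)
qed

lemma hmul_sV_pV:
  "0 < j \<Longrightarrow> 3 dvd k \<Longrightarrow> 0 < k \<Longrightarrow> hmul (sV j) (pV r k) =
   (vsc (3/4) (pV r j + pV r k) - vsc (3/8) (pV r (nd (int j) (int k)) + pV r (j + k)) :: hidx \<Rightarrow> 'a::field)"
proof -
  assume j: "0 < j" and k: "3 dvd k" "0 < k"
  have "hmul (sV j) (pV r k) =
      (vsc (pcoeff r 1) (bmul (S j) (P 1 k)) + vsc (pcoeff r 2) (bmul (S j) (P 2 k)) :: hidx \<Rightarrow> 'a)"
    using j k by (simp add: pV_basis_expansion[of k r] hmul_add_right hmul_vsc_right) (simp add: sV_def hmul_evec)
  also have "\<dots> = vsc (3/4) (pV r j + pV r k) - vsc (3/8) (pV r (nd (int j) (int k)) + pV r (j + k))"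
    unfolding pV_expand[of r] by (simp add: fun_eq_iff algebra_simps)
  finally show ?thesis .
qed

lemma hmul_pV_pV:
  "3 dvd h \<Longrightarrow> 0 < h \<Longrightarrow> 3 dvd k \<Longrightarrow> 0 < k \<Longrightarrow> hmul (pV r h) (pV t k) =
   (vsc (1/4) (zV (- (r + t)) h + zV (- (r + t)) k)
     - vsc (1/8) (zV (- (r + t)) (nd (int h) (int k)) + zV (- (r + t)) (h + k)) :: hidx \<Rightarrow> 'a::field)"
proof -
  assume hk: "3 dvd h" "0 < h" "3 dvd k" "0 < k"
  have "hmul (pV r h) (pV t k) = (vsc (pcoeff r 1 * pcoeff t 1) (bmul (P 1 h) (P 1 k))
     + vsc (pcoeff r 1 * pcoeff t 2) (bmul (P 1 h) (P 2 k))
     + vsc (pcoeff r 2 * pcoeff t 1) (bmul (P 2 h) (P 1 k))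
     + vsc (pcoeff r 2 * pcoeff t 2) (bmul (P 2 h) (P 2 k)) :: hidx \<Rightarrow> 'a)"
    using hk
    by (simp add: pV_basis_expansion[of h r] pV_basis_expansion[of k t] hmul_add_left hmul_add_right
        hmul_vsc_left hmul_vsc_right hmul_evec) (simp add: fun_eq_iff algebra_simps)
  also have "\<dots> = vsc (1/4) (zV (- (r + t)) h + zV (- (r + t)) k)
     - vsc (1/8) (zV (- (r + t)) (nd (int h) (int k)) + zV (- (r + t)) (h + k))"
    unfolding zV_minus_sum_expand[of r t] by (simp add: fun_eq_iff algebra_simps)
  finally show ?thesis .
qed

subsection \<open>Automorphisms induced by the dihedral group\<close>

text \<open>The sign e on p_{r,k} compensates for z_{i,j} = p_{i+1,j} - p_{i-1,j}, whose two terms are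
  exchanged by a reflection of the index.\<close>
fun aut_basis_img :: "int \<Rightarrow> int \<Rightarrow> hidx \<Rightarrow> hidx \<Rightarrow> 'a::field" where
  "aut_basis_img c e (A i) = aV (c + e * i)"
| "aut_basis_img c e (S j) = sV j"
| "aut_basis_img c e (P r k) = vsc (of_int e) (pV (c + e * r) k)"

definition induced_aut :: "int \<Rightarrow> int \<Rightarrow> (hidx \<Rightarrow> 'a::field) \<Rightarrow> hidx \<Rightarrow> 'a" where
  "induced_aut c e = lin_ext (aut_basis_img c e)"

lemma Hcarrier_aut_basis_img [simp]: "aut_basis_img c e b \<in> Hcarrier"
  by (cases b) simp_all

lemma Hcarrier_induced_aut [simp]: "v \<in> Hcarrier \<Longrightarrow> induced_aut c e v \<in> Hcarrier"
  by (simp add: induced_aut_def Hcarrier_lin_ext)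

lemma Hlinear_induced_aut: "Hlinear (induced_aut c e)"
  by (simp add: induced_aut_def Hlinear_lin_ext)

lemmas induced_aut_linear [simp] =
  Hlinear_add[OF Hlinear_induced_aut] Hlinear_diff[OF Hlinear_induced_aut]
  Hlinear_vsc[OF Hlinear_induced_aut] Hlinear_zero[OF Hlinear_induced_aut]

lemma induced_aut_evec: "valid_idx b \<Longrightarrow> induced_aut c e (evec b) = aut_basis_img c e b"
  by (simp add: induced_aut_def lin_ext_evec)

lemma induced_aut_aV [simp]: "induced_aut c e (aV i) = aV (c + e * i)"
  by (simp add: aV_def induced_aut_evec)

lemma induced_aut_sV [simp]: "induced_aut c e (sV j) = sV j"
  by (simp add: sV_def induced_aut_evec)

lemma induced_aut_pV:
  assumes e: "e \<in> {1, -1}"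
  shows "induced_aut c e (pV r k) = vsc (of_int e) (pV (c + e * r) k)"
proof (cases "3 dvd k \<and> 0 < k")
  case True
  then show ?thesis
    by (simp add: pV_basis_expansion[of k r] induced_aut_evec pV_affine[OF e, of c r] fun_eq_iff algebra_simps)
next
  case False
  then show ?thesis by (simp add: pV_eq_0)
qed

lemma induced_aut_zV:
  assumes e: "e \<in> {1, -1}"
  shows "induced_aut c e (zV r k) = zV (c + e * r) k"
  using e by (auto simp: zV_def induced_aut_pV[OF e] fun_eq_iff algebra_simps)

lemma nd_affine: "e \<in> {1, -1} \<Longrightarrow> nd (c + e * i) (c + e * i') = nd i i'"
  unfolding nd_def by (auto simp: abs_if algebra_simps)

lemma induced_aut_AA:
  "e \<in> {1, -1} \<Longrightarrow> induced_aut c e (bmul (A i) (A i')) = hmul (aut_basis_img c e (A i)) (aut_basis_img c e (A i'))"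
  by (simp add: induced_aut_zV nd_affine hmul_aV_aV)

lemma induced_aut_AS:
  "e \<in> {1, -1} \<Longrightarrow> 0 < j \<Longrightarrow>
   induced_aut c e (bmul (A i) (S j)) = hmul (aut_basis_img c e (A i)) (aut_basis_img c e (S j))"
  by (simp add: induced_aut_zV hmul_aV_sV) (auto simp: algebra_simps)

lemma induced_aut_AP:
  assumes e: "e \<in> {1, -1}"
  shows "induced_aut c e (bmul (A i) (P r k)) = hmul (aut_basis_img c e (A i)) (aut_basis_img c e (P r k))"
proof -
  have "(pV (c + e * - (i + r)) k :: hidx \<Rightarrow> 'a) = pV (- (c + e * i + (c + e * r))) k"
    by (rule pV_mod3) (use e in \<open>auto; presburger\<close>)
  then show ?thesis by (simp add: induced_aut_pV[OF e] hmul_vsc_right hmul_aV_pV vsc_diff mult.commute)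
qed

lemma induced_aut_SS:
  "0 < j \<Longrightarrow> 0 < l \<Longrightarrow> induced_aut c e (bmul (S j) (S l)) = hmul (aut_basis_img c e (S j)) (aut_basis_img c e (S l))"
  by (simp add: hmul_sV_sV)

lemma induced_aut_SP:
  "e \<in> {1, -1} \<Longrightarrow> 0 < j \<Longrightarrow> 3 dvd k \<Longrightarrow> 0 < k \<Longrightarrow>
   induced_aut c e (bmul (S j) (P r k)) = hmul (aut_basis_img c e (S j)) (aut_basis_img c e (P r k))"
  by (simp add: induced_aut_pV hmul_vsc_right hmul_sV_pV) (simp add: fun_eq_iff algebra_simps)

lemma induced_aut_PP:
  assumes e: "e \<in> {1, -1}" and hk: "3 dvd h" "0 < h" "3 dvd k" "0 < k"
  shows "induced_aut c e (bmul (P r h) (P t k)) = hmul (aut_basis_img c e (P r h)) (aut_basis_img c e (P t k))"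
proof -
  have "(zV (c + e * - (r + t)) m :: hidx \<Rightarrow> 'a) = zV (- (c + e * r + (c + e * t))) m" for m
    by (rule zV_mod3) (use e in \<open>auto; presburger\<close>)
  moreover have "(of_int e * of_int e :: 'a) = 1" using e by auto
  ultimately show ?thesis
    by (simp add: induced_aut_zV[OF e] induced_aut_pV[OF e] hmul_vsc_right hmul_vsc_left hmul_pV_pV[OF hk])
qed

lemma induced_aut_bmul_commute:
  "induced_aut c e (bmul b b') = (hmul (aut_basis_img c e b) (aut_basis_img c e b') :: hidx \<Rightarrow> 'a::field) \<Longrightarrow>
   induced_aut c e (bmul b' b) = (hmul (aut_basis_img c e b') (aut_basis_img c e b) :: hidx \<Rightarrow> 'a)"
  by (subst bmul_commute, subst hmul_commute) simp_all

lemma induced_aut_bmul: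
  assumes "e \<in> {1, -1}" "valid_idx b" "valid_idx b'"
  shows "induced_aut c e (bmul b b') = hmul (aut_basis_img c e b) (aut_basis_img c e b')"
  using assms
  by (cases b; cases b')
    (auto simp del: bmul.simps aut_basis_img.simps intro: induced_aut_AA induced_aut_AS induced_aut_AP
      induced_aut_SS induced_aut_SP induced_aut_PP induced_aut_bmul_commute[OF induced_aut_AS]
      induced_aut_bmul_commute[OF induced_aut_AP] induced_aut_bmul_commute[OF induced_aut_SP])

lemma induced_aut_inverse:
  assumes e: "e \<in> {1, -1}" and v: "v \<in> Hcarrier"
  shows "induced_aut c e (induced_aut (- e * c) e v) = (v :: hidx \<Rightarrow> 'a::field)"
proof -
  have "(induced_aut c e \<circ> induced_aut (- e * c) e) v = id v"
  proof (rule Hlinear_eqI[OF Hlinear_comp[OF Hlinear_induced_aut Hlinear_induced_aut] Hlinear_id _ v])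
    fix b :: hidx assume b: "valid_idx b"
    have inv: "c + e * (- e * c + e * i) = i" for i using e by auto
    have "(of_int e * of_int e :: 'a) = 1" using e by auto
    then show "(induced_aut c e \<circ> induced_aut (- e * c) e) (evec b) = id (evec b :: hidx \<Rightarrow> 'a)"
      using b inv by (cases b) (simp_all add: induced_aut_evec induced_aut_pV[OF e] pV_eq_evec sV_def flip: aV_def)
  qed simp
  then show ?thesis by simp
qed

lemma induced_aut_in_Hauts:
  assumes e: "e \<in> {1, -1}"
  shows "induced_aut c e \<in> Hauts"
  unfolding Hauts_def
proof (intro CollectI conjI ballI allI)
  show "induced_aut c e \<in> extensional Hcarrier"
    by (simp add: induced_aut_def lin_ext_def)
  have inv: "- e * (- e * c) = c" using e by auto
  show "bij_betw (induced_aut c e) Hcarrier Hcarrier"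
    using induced_aut_inverse[OF e, of _ c] induced_aut_inverse[OF e, of _ "- e * c", unfolded inv]
    by (intro bij_betw_byWitness[where f' = "induced_aut (- e * c) e"]) auto
  fix x y :: "hidx \<Rightarrow> 'a" assume "x \<in> Hcarrier" "y \<in> Hcarrier"
  then show "induced_aut c e (hmul x y) = hmul (induced_aut c e x) (induced_aut c e y)"
    using induced_aut_bmul[OF e] by (intro Hlinear_hmulI[OF Hlinear_induced_aut]) (simp_all add: induced_aut_evec)
qed simp_all

subsection \<open>Idempotents\<close>

lemma hmul_self_apply_subset:
  fixes x :: "hidx \<Rightarrow> 'a::field"
  assumes "finite F" "hsupp x \<subseteq> F" "E \<subseteq> F \<times> F"
    and "\<And>b b'. x b \<noteq> 0 \<Longrightarrow> x b' \<noteq> 0 \<Longrightarrow> (b, b') \<notin> E \<Longrightarrow> bmul b b' c = (0::'a)"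
  shows "hmul x x c = (\<Sum>(b, b')\<in>E. x b * x b' * bmul b b' c)"
proof -
  have "hmul x x c = (\<Sum>(b, b')\<in>F \<times> F. x b * x b' * bmul b b' c)"
    by (simp add: hmul_apply[OF assms(1,2,1,2)] sum.cartesian_product)
  also have "\<dots> = (\<Sum>(b, b')\<in>E. x b * x b' * bmul b b' c)"
  proof -
    have "x b * x b' * bmul b b' c = 0" if "(b, b') \<notin> E" for b b'
      using assms(4)[of b b'] that by (cases "x b = 0 \<or> x b' = 0") auto
    then show ?thesis using assms(1,3) by (intro sum.mono_neutral_right) auto
  qed
  finally show ?thesis .
qed

lemma numerals_neq_zero:
  assumes "(2::'a::field) \<noteq> 0" "(3::'a) \<noteq> 0"
  shows "(6::'a) \<noteq> 0" "(8::'a) \<noteq> 0"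
proof -
  have "(6::'a) = 2 * 3" "(8::'a) = 2 * 2 * 2" by simp_all
  then show "(6::'a) \<noteq> 0" "(8::'a) \<noteq> 0"
    by (simp_all only: mult_eq_0_iff assms simp_thms)
qed

lemma idempotent_S_zero_if_A:
  fixes x :: "hidx \<Rightarrow> 'a::field"
  assumes x: "x \<in> Hcarrier" "hmul x x = x" and two: "(2::'a) \<noteq> 0" and three: "(3::'a) \<noteq> 0"
    and "x (A i) \<noteq> 0"
  shows "x (S j) = 0"
proof (rule ccontr)
  assume "x (S j) \<noteq> 0"
  define M where "M = Max {i. x (A i) \<noteq> 0}"
  define N where "N = Max {j. x (S j) \<noteq> 0}"
  have finA: "finite {i. x (A i) \<noteq> 0}" and finS: "finite {j. x (S j) \<noteq> 0}"
    using finite_coeffs[OF x(1), of A] finite_coeffs[OF x(1), of S] by (simp_all add: inj_def)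
  have xM: "x (A M) \<noteq> 0" and xN: "x (S N) \<noteq> 0"
    unfolding M_def N_def using Max_in[OF finA] Max_in[OF finS] assms(5) \<open>x (S j) \<noteq> 0\<close> by auto
  have bM: "x (A i) \<noteq> 0 \<Longrightarrow> i \<le> M" and bN: "x (S j) \<noteq> 0 \<Longrightarrow> j \<le> N" for i j
    unfolding M_def N_def using finA finS by simp_all
  have N1: "1 \<le> N" using HcarrierD(2)[OF x(1) xN] by simp
  have support: "x b \<noteq> 0 \<Longrightarrow> (case b of A i \<Rightarrow> i \<le> M | S j \<Rightarrow> 1 \<le> j \<and> j \<le> N | P r k \<Rightarrow> True)" for b
    using bM bN HcarrierD(2)[OF x(1), of b] by (cases b) auto
  have "hmul x x (A (M + int N)) = (\<Sum>(b, b')\<in>{(A M, S N), (S N, A M)}. x b * x b' * bmul b b' (A (M + int N)))"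
  proof (rule hmul_self_apply_subset[OF HcarrierD(1)[OF x(1)] order_refl])
    show "{(A M, S N), (S N, A M)} \<subseteq> hsupp x \<times> hsupp x" using xM xN by (auto simp: hsupp_def)
    fix b b' assume "x b \<noteq> 0" "x b' \<noteq> 0" "(b, b') \<notin> {(A M, S N), (S N, A M)}"
    then show "bmul b b' (A (M + int N)) = 0"
      using support[of b] support[of b'] N1 by (cases b; cases b') auto
  qed
  also have "\<dots> = 2 * (3/8) * x (A M) * x (S N)"
    using N1 by (simp add: algebra_simps)
  finally have "x (A (M + int N)) = 2 * (3/8) * x (A M) * x (S N)" using x(2) by simp
  moreover have "x (A (M + int N)) = 0" using bM[of "M + int N"] N1 by force
  ultimately show False using xM xN two three numerals_neq_zero[OF two three] by simp
qed

lemma idempotent_S_zero_if_no_A: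
  fixes x :: "hidx \<Rightarrow> 'a::field"
  assumes x: "x \<in> Hcarrier" "hmul x x = x" and two: "(2::'a) \<noteq> 0" and three: "(3::'a) \<noteq> 0"
    and no_A: "\<And>i. x (A i) = 0"
  shows "x (S j) = 0"
proof (rule ccontr)
  assume "x (S j) \<noteq> 0"
  define N where "N = Max {j. x (S j) \<noteq> 0}"
  have finS: "finite {j. x (S j) \<noteq> 0}" using finite_coeffs[OF x(1), of S] by (simp add: inj_def)
  have xN: "x (S N) \<noteq> 0" unfolding N_def using Max_in[OF finS] \<open>x (S j) \<noteq> 0\<close> by auto
  have bN: "x (S j) \<noteq> 0 \<Longrightarrow> j \<le> N" for j unfolding N_def using finS by simp
  have N1: "1 \<le> N" using HcarrierD(2)[OF x(1) xN] by simp
  have support: "x b \<noteq> 0 \<Longrightarrow> (case b of A i \<Rightarrow> False | S j \<Rightarrow> 1 \<le> j \<and> j \<le> N | P r k \<Rightarrow> True)" for b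
    using no_A bN HcarrierD(2)[OF x(1), of b] by (cases b) auto
  have "hmul x x (S (2 * N)) = (\<Sum>(b, b')\<in>{(S N, S N)}. x b * x b' * bmul b b' (S (2 * N)))"
  proof (rule hmul_self_apply_subset[OF HcarrierD(1)[OF x(1)] order_refl])
    show "{(S N, S N)} \<subseteq> hsupp x \<times> hsupp x" using xN by (auto simp: hsupp_def)
    fix b b' assume "x b \<noteq> 0" "x b' \<noteq> 0" "(b, b') \<notin> {(S N, S N)}"
    then show "bmul b b' (S (2 * N)) = 0"
      using support[of b] support[of b'] N1 by (cases b; cases b') (auto simp: nd_def)
  qed
  also have "\<dots> = - (3/8) * x (S N) * x (S N)"
    using N1 by (simp add: nd_def)
  finally have "x (S (2 * N)) = - (3/8) * x (S N) * x (S N)" using x(2) by simp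
  moreover have "x (S (2 * N)) = 0" using bN[of "2 * N"] N1 by force
  ultimately show False using xN three numerals_neq_zero[OF two three] by simp
qed

lemma idempotent_S_zero:
  fixes x :: "hidx \<Rightarrow> 'a::field"
  assumes "x \<in> Hcarrier" "hmul x x = x" "(2::'a) \<noteq> 0" "(3::'a) \<noteq> 0"
  shows "x (S j) = 0"
  using idempotent_S_zero_if_A[OF assms] idempotent_S_zero_if_no_A[OF assms] by blast

lemma idempotent_A_unique:
  fixes x :: "hidx \<Rightarrow> 'a::field"
  assumes x: "x \<in> Hcarrier" "hmul x x = x" and two: "(2::'a) \<noteq> 0"
    and no_S: "\<And>j. x (S j) = 0" and "x (A i) \<noteq> 0" "x (A i') \<noteq> 0"
  shows "i = i'"
proof (rule ccontr)
  assume "i \<noteq> i'"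
  define m where "m = Min {i. x (A i) \<noteq> 0}"
  define M where "M = Max {i. x (A i) \<noteq> 0}"
  have finA: "finite {i. x (A i) \<noteq> 0}" using finite_coeffs[OF x(1), of A] by (simp add: inj_def)
  have xm: "x (A m) \<noteq> 0" and xM: "x (A M) \<noteq> 0"
    unfolding m_def M_def using Min_in[OF finA] Max_in[OF finA] assms(5) by auto
  have bounds: "x (A a) \<noteq> 0 \<Longrightarrow> m \<le> a \<and> a \<le> M" for a unfolding m_def M_def using finA by simp
  have "m < M" using bounds[OF assms(5)] bounds[OF assms(6)] \<open>i \<noteq> i'\<close> by auto
  define d where "d = nd m M"
  have d: "d = nd a a' \<longleftrightarrow> (a = m \<and> a' = M) \<or> (a = M \<and> a' = m)"
    if "m \<le> a \<and> a \<le> M" "m \<le> a' \<and> a' \<le> M" for a a'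
    using that \<open>m < M\<close> unfolding d_def nd_def by auto
  have support: "x b \<noteq> 0 \<Longrightarrow> (case b of A a \<Rightarrow> m \<le> a \<and> a \<le> M | S j \<Rightarrow> False | P r k \<Rightarrow> True)" for b
    using no_S bounds by (cases b) auto
  have "hmul x x (S d) = (\<Sum>(b, b')\<in>{(A m, A M), (A M, A m)}. x b * x b' * bmul b b' (S d))"
  proof (rule hmul_self_apply_subset[OF HcarrierD(1)[OF x(1)] order_refl])
    show "{(A m, A M), (A M, A m)} \<subseteq> hsupp x \<times> hsupp x" using xm xM by (auto simp: hsupp_def)
    fix b b' assume "x b \<noteq> 0" "x b' \<noteq> 0" "(b, b') \<notin> {(A m, A M), (A M, A m)}"
    then show "bmul b b' (S d) = 0"
      using support[of b] support[of b'] by (cases b; cases b') (auto simp: d)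
  qed
  also have "\<dots> = 2 * x (A m) * x (A M)"
    using \<open>m < M\<close> by (simp add: d_def nd_commute[of M] nd_def)
  finally have "x (S d) = 2 * x (A m) * x (A M)" using x(2) by simp
  then show False using xm xM two no_S by simp
qed

lemma quadratic_forms_common_zero:
  fixes a b :: "'a::field"
  assumes two: "(2::'a) \<noteq> 0" and three: "(3::'a) \<noteq> 0"
    and q1: "a*a + 2*a*b - 2*b*b = 0" and q2: "2*a*a - 2*a*b - b*b = 0"
  shows "a = 0 \<and> b = 0"
proof -
  have "3 * (a*a - b*b) = (a*a + 2*a*b - 2*b*b) + (2*a*a - 2*a*b - b*b)" by (simp add: algebra_simps)
  then have sq: "a*a = b*b" using q1 q2 three by simp
  have "b * (2*a - b) = (a*a + 2*a*b - 2*b*b) + (b*b - a*a)" by (simp add: algebra_simps)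
  then have "b * (2*a - b) = 0" using q1 sq by simp
  then have "b = 0 \<or> b = 2*a" by auto
  then show ?thesis
  proof
    assume "b = 2*a"
    then have "3 * (a*a) = b*b - a*a" by (simp add: algebra_simps)
    then have "3 * (a*a) = 0" using sq by simp
    then show ?thesis using \<open>b = 2*a\<close> three by simp
  qed (use sq in simp)
qed

lemma hmul_self_apply_P_double:
  fixes x :: "hidx \<Rightarrow> 'a::field"
  assumes x: "x \<in> Hcarrier" and K: "3 dvd K" "0 < K"
    and support: "\<And>b. x b \<noteq> 0 \<Longrightarrow>
      (case b of A i \<Rightarrow> i = M | S j \<Rightarrow> False | P r k \<Rightarrow> r \<in> {1, 2} \<and> 3 dvd k \<and> 0 < k \<and> k \<le> K)"
  defines "e1 \<equiv> x (P 1 K)" and "e2 \<equiv> x (P 2 K)"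
  shows "hmul x x (P 1 (2 * K)) = - (1/8) * (e1*e1 + 2*e1*e2 - 2*e2*e2)"
    and "hmul x x (P 2 (2 * K)) = - (1/8) * (2*e1*e1 - 2*e1*e2 - e2*e2)"
proof -
  define E where "E = {P 1 K, P 2 K} \<times> {P 1 K, P 2 K}"
  have index_2K: "2 * K \<noteq> k" "2 * K \<noteq> nd (int h) (int k)" "2 * K = h + k \<longleftrightarrow> h = K \<and> k = K"
    if "h \<le> K" "k \<le> K" for h k
    using that K unfolding nd_def by auto
  have coeff: "hmul x x (P t (2 * K)) = (\<Sum>(b, b')\<in>E. x b * x b' * bmul b b' (P t (2 * K)))" for t
  proof (rule hmul_self_apply_subset[of "hsupp x \<union> {P 1 K, P 2 K}"])
    show "finite (hsupp x \<union> {P 1 K, P 2 K})" using HcarrierD(1)[OF x] by simp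
    fix b b' assume "x b \<noteq> 0" "x b' \<noteq> 0" "(b, b') \<notin> E"
    then show "bmul b b' (P t (2 * K)) = 0"
      using support[of b] support[of b'] unfolding E_def
      by (cases b; cases b') (auto simp: index_2K nd_def[of M M])
  qed (auto simp: E_def)
  show "hmul x x (P 1 (2 * K)) = - (1/8) * (e1*e1 + 2*e1*e2 - 2*e2*e2)"
    and "hmul x x (P 2 (2 * K)) = - (1/8) * (2*e1*e1 - 2*e1*e2 - e2*e2)"
    unfolding coeff E_def using K
    by (simp_all add: sum.cartesian_product[symmetric] nd_def e1_def e2_def pcoeff_def mult_2[symmetric] algebra_simps)
qed

lemma idempotent_P_zero:
  fixes x :: "hidx \<Rightarrow> 'a::field"
  assumes x: "x \<in> Hcarrier" "hmul x x = x" and two: "(2::'a) \<noteq> 0" and three: "(3::'a) \<noteq> 0"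
    and no_S: "\<And>j. x (S j) = 0" and A_M: "\<And>i. x (A i) \<noteq> 0 \<Longrightarrow> i = M"
  shows "x (P r k) = 0"
proof (rule ccontr)
  assume "x (P r k) \<noteq> 0"
  define Ks where "Ks = {k. x (P 1 k) \<noteq> 0 \<or> x (P 2 k) \<noteq> 0}"
  define K where "K = Max Ks"
  have "finite Ks"
    using finite_coeffs[OF x(1), of "P 1"] finite_coeffs[OF x(1), of "P 2"]
    unfolding Ks_def Collect_disj_eq by (simp add: inj_def del: Collect_disj_eq)
  moreover have "k \<in> Ks" using \<open>x (P r k) \<noteq> 0\<close> HcarrierD(2)[OF x(1)] unfolding Ks_def by force
  ultimately have xK: "x (P 1 K) \<noteq> 0 \<or> x (P 2 K) \<noteq> 0" and bK: "\<And>k. k \<in> Ks \<Longrightarrow> k \<le> K"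
    unfolding K_def using Max_in[of Ks] by (auto simp: Ks_def)
  have K: "3 dvd K" "0 < K" using xK HcarrierD(2)[OF x(1), of "P 1 K"] HcarrierD(2)[OF x(1), of "P 2 K"] by auto
  have support: "x b \<noteq> 0 \<Longrightarrow>
      (case b of A i \<Rightarrow> i = M | S j \<Rightarrow> False | P r k \<Rightarrow> r \<in> {1, 2} \<and> 3 dvd k \<and> 0 < k \<and> k \<le> K)" for b
    using no_S A_M bK HcarrierD(2)[OF x(1), of b] by (cases b) (auto simp: Ks_def)
  have "2 * K \<notin> Ks" using bK[of "2 * K"] K by auto
  then have "x (P 1 (2 * K)) = 0" "x (P 2 (2 * K)) = 0" unfolding Ks_def by auto
  then have "x (P 1 K) * x (P 1 K) + 2 * x (P 1 K) * x (P 2 K) - 2 * x (P 2 K) * x (P 2 K) = 0"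
    and "2 * x (P 1 K) * x (P 1 K) - 2 * x (P 1 K) * x (P 2 K) - x (P 2 K) * x (P 2 K) = 0"
    using hmul_self_apply_P_double[OF x(1) K support] x(2) numerals_neq_zero[OF two three] by simp_all
  then show False using quadratic_forms_common_zero[OF two three] xK by blast
qed

lemma idempotent_A_coeff:
  fixes x :: "hidx \<Rightarrow> 'a::field"
  assumes x: "x \<in> Hcarrier" "hmul x x = x" and two: "(2::'a) \<noteq> 0"
    and no_S: "\<And>j. x (S j) = 0" and A_M: "\<And>i. x (A i) \<noteq> 0 \<Longrightarrow> i = M" and xM: "x (A M) \<noteq> 0"
  shows "x (A M) = 1"
proof -
  have support: "x b \<noteq> 0 \<Longrightarrow> (case b of A i \<Rightarrow> i = M | S j \<Rightarrow> False | P r k \<Rightarrow> True)" for b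
    using no_S A_M by (cases b) auto
  have "hmul x x (A M) = (\<Sum>(b, b')\<in>{(A M, A M)}. x b * x b' * bmul b b' (A M))"
  proof (rule hmul_self_apply_subset[OF HcarrierD(1)[OF x(1)] order_refl])
    show "{(A M, A M)} \<subseteq> hsupp x \<times> hsupp x" using xM by (auto simp: hsupp_def)
    fix b b' assume "x b \<noteq> 0" "x b' \<noteq> 0" "(b, b') \<notin> {(A M, A M)}"
    then show "bmul b b' (A M) = 0" using support[of b] support[of b'] by (cases b; cases b') auto
  qed
  also have "\<dots> = x (A M) * x (A M)" using two by (simp add: nd_def)
  finally show ?thesis using x(2) xM by simp
qed

theorem idempotent_cases:
  fixes x :: "hidx \<Rightarrow> 'a::field"
  assumes x: "x \<in> Hcarrier" "hmul x x = x" and two: "(2::'a) \<noteq> 0" and three: "(3::'a) \<noteq> 0"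
  shows "x = 0 \<or> (\<exists>i. x = aV i)"
proof -
  note no_S = idempotent_S_zero[OF x two three]
  show ?thesis
  proof (cases "\<exists>M. x (A M) \<noteq> 0")
    case False
    have "x = 0"
    proof
      fix b show "x b = 0 b"
        using False no_S idempotent_P_zero[OF x two three no_S, of 0] by (cases b) auto
    qed
    then show ?thesis ..
  next
    case True
    then obtain M where xM: "x (A M) \<noteq> 0" by blast
    have A_M: "\<And>i. x (A i) \<noteq> 0 \<Longrightarrow> i = M" using idempotent_A_unique[OF x two no_S _ xM] by blast
    have "x = aV M"
    proof
      fix b show "x b = aV M b"
        using no_S A_M idempotent_A_coeff[OF x two no_S A_M xM] idempotent_P_zero[OF x two three no_S A_M]
        by (cases b) auto
    qed
    then show ?thesis by blast
  qed
qed

subsection \<open>The a_i generate hat-H\<close>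

lemma aV_eq_iff [simp]: "(aV i :: hidx \<Rightarrow> 'a::field) = aV j \<longleftrightarrow> i = j"
  by (auto simp: fun_eq_iff dest: spec[of _ "A i"])

lemma aV_neq_zero [simp]: "(aV i :: hidx \<Rightarrow> 'a::field) \<noteq> 0"
  by (auto simp: fun_eq_iff dest: spec[of _ "A i"])

lemma hmul_aV_self: "(2::'a::field) \<noteq> 0 \<Longrightarrow> hmul (aV i) (aV i) = (aV i :: hidx \<Rightarrow> 'a)"
  by (simp add: hmul_aV_aV nd_def zV_def pV_eq_0 fun_eq_iff)

lemma hmul_aV_aV_shift:
  "0 < j \<Longrightarrow> hmul (aV i) (aV (i + int j)) - vsc (1/2) (aV i + aV (i + int j)) = (sV j + zV i j :: hidx \<Rightarrow> 'a::field)"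
  by (simp add: hmul_aV_aV nd_def fun_eq_iff)

lemma evec_P1_eq:
  "3 dvd j \<Longrightarrow> 0 < j \<Longrightarrow> (3::'a::field) \<noteq> 0 \<Longrightarrow>
   evec (P 1 j) = vsc (1/3) ((sV j + zV 0 j) - (sV j + zV 2 j) :: hidx \<Rightarrow> 'a)"
  by (rule ext, case_tac x) (auto simp: pcoeff_def)

lemma evec_P2_eq:
  "3 dvd j \<Longrightarrow> 0 < j \<Longrightarrow> (3::'a::field) \<noteq> 0 \<Longrightarrow>
   evec (P 2 j) = vsc (1/3) ((sV j + zV 1 j) - (sV j + zV 0 j) :: hidx \<Rightarrow> 'a)"
  by (rule ext, case_tac x) (auto simp: pcoeff_def)

lemma evec_S_eq_dvd3:
  "3 dvd j \<Longrightarrow> 0 < j \<Longrightarrow> evec (S j) = (sV j + zV 0 j) - evec (P 1 j) + (evec (P 2 j) :: hidx \<Rightarrow> 'a::field)"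
  by (rule ext, case_tac x) (auto simp: pcoeff_def)

lemma evec_S_eq: "\<not> 3 dvd j \<Longrightarrow> 0 < j \<Longrightarrow> evec (S j) = (sV j + zV 0 j :: hidx \<Rightarrow> 'a::field)"
  by (rule ext, case_tac x) (auto simp: pcoeff_def)

text \<open>The products a_i a_{i+j} yield s_j + z_{i,j}, and dividing by 3 separates s_j, p_{1,j}
  and p_{2,j}.\<close>
lemma basis_in_generated_subalgebra:
  fixes Q :: "(hidx \<Rightarrow> 'a::field) \<Rightarrow> bool"
  assumes three: "(3::'a) \<noteq> 0"
    and add: "\<And>u w. Q u \<Longrightarrow> Q w \<Longrightarrow> Q (u + w)" and diff: "\<And>u w. Q u \<Longrightarrow> Q w \<Longrightarrow> Q (u - w)"
    and vsc: "\<And>c u. Q u \<Longrightarrow> Q (vsc c u)" and mul: "\<And>u w. Q u \<Longrightarrow> Q w \<Longrightarrow> Q (hmul u w)"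
    and gen: "\<And>i. Q (aV i)" and b: "valid_idx b"
  shows "Q (evec b)"
proof -
  have s_plus_z: "Q (sV j + zV r j)" if "0 < j" for r j
    using hmul_aV_aV_shift[OF that, of r, where 'a = 'a] by (metis add diff gen mul vsc)
  have Q_P: "Q (evec (P 1 j)) \<and> Q (evec (P 2 j))" if "3 dvd j" "0 < j" for j
    unfolding evec_P1_eq[OF that three] evec_P2_eq[OF that three] using that(2) by (intro conjI vsc diff s_plus_z)
  show ?thesis
  proof (cases b)
    case (A i) then show ?thesis using gen[of i] by (simp add: aV_def)
  next
    case (S j)
    then have "0 < j" using b by simp
    show ?thesis
    proof (cases "3 dvd j")
      case True
      have "Q (sV j + zV 0 j)" using \<open>0 < j\<close> by (rule s_plus_z)
      then show ?thesis unfolding \<open>b = S j\<close> evec_S_eq_dvd3[OF True \<open>0 < j\<close>]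
        using Q_P[OF True \<open>0 < j\<close>] by (blast intro: add diff)
    next
      case False
      show ?thesis unfolding \<open>b = S j\<close> evec_S_eq[OF False \<open>0 < j\<close>] using \<open>0 < j\<close> by (rule s_plus_z)
    qed
  next
    case (P r k)
    then show ?thesis using b Q_P by auto
  qed
qed

subsection \<open>Affine permutations of the integers\<close>

definition affine_map :: "int \<Rightarrow> int \<Rightarrow> int \<Rightarrow> int" where
  "affine_map c e = (\<lambda>i. c + e * i)"

definition affine_perms :: "(int \<Rightarrow> int) set" where
  "affine_perms = {affine_map c e | c e. e \<in> {1, -1}}"

lemma affine_map_in_affine_perms [simp]: "e \<in> {1, -1} \<Longrightarrow> affine_map c e \<in> affine_perms"
  by (auto simp: affine_perms_def)

lemma inj_constant_step_affine:
  fixes g :: "int \<Rightarrow> int"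
  assumes inj: "inj g" and step: "\<And>i. g (i + 1) - g i \<in> {1, -1}"
  shows "g \<in> affine_perms"
proof -
  define e where "e = g 1 - g 0"
  have const: "g (i + 1) - g i = e" for i
  proof (induction i rule: int_induct[where k = 0])
    case (step1 i)
    have "g (i + 1 + 1) \<noteq> g i" using injD[OF inj, of "i + 1 + 1" i] by auto
    moreover have "g (i + 1 + 1) - g (i + 1) \<in> {1, -1}" "g (i + 1) - g i \<in> {1, -1}" by (rule step)+
    ultimately show ?case using step1 by auto
  next
    case (step2 i)
    have "g (i - 1) \<noteq> g (i + 1)" using injD[OF inj, of "i - 1" "i + 1"] by auto
    moreover have "g (i - 1 + 1) - g (i - 1) \<in> {1, -1}" "g (i + 1) - g i \<in> {1, -1}" by (rule step)+
    ultimately show ?case using step2 by auto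
  qed (simp add: e_def)
  have linear: "g i = g 0 + e * i" for i
  proof (induction i rule: int_induct[where k = 0])
    case (step1 i) then show ?case using const[of i] by (simp add: algebra_simps)
  next
    case (step2 i) then show ?case using const[of "i - 1"] by (simp add: algebra_simps)
  qed simp
  have "g = affine_map (g 0) e"
  proof
    fix i show "g i = affine_map (g 0) e i" using linear[of i] by (simp add: affine_map_def)
  qed
  moreover have "e \<in> {1, -1}" using step[of 0] by (simp add: e_def)
  ultimately show ?thesis by (auto simp: affine_perms_def)
qed

text \<open>d divides every g i - g 0, so surjectivity forces d = 1.\<close>
lemma bij_constant_distance_affine:
  fixes g :: "int \<Rightarrow> int"
  assumes "bij g" and dist: "\<And>i. \<bar>g (i + 1) - g i\<bar> = d"
  shows "g \<in> affine_perms"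
proof (rule inj_constant_step_affine)
  show "inj g" using assms(1) by (rule bij_is_inj)
  have step: "d dvd g (i + 1) - g i" for i using dist[of i] dvd_abs_iff[of d "g (i + 1) - g i"] by simp
  have "d dvd g i - g 0" for i
  proof (induction i rule: int_induct[where k = 0])
    case (step1 i) then show ?case using dvd_add[OF step[of i] step1(2)] by simp
  next
    case (step2 i) then show ?case using dvd_diff[OF step2(2) step[of "i - 1"]] by simp
  qed simp
  moreover obtain i where "g i = g 0 + 1" using assms(1) by (metis bij_pointE)
  ultimately have "d dvd 1" by (metis add_diff_cancel_left')
  moreover have "0 \<le> d" using dist[of 0] by (metis abs_ge_zero)
  ultimately have "d = 1" by simp
  then show "g (i + 1) - g i \<in> {1, -1}" for i using dist[of i] by (simp, arith)
qed

lemma affine_map_inverse: "e \<in> {1, -1} \<Longrightarrow> affine_map c e (affine_map (- e * c) e x) = x"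
  by (auto simp: affine_map_def algebra_simps)

lemma affine_map_Bij: "e \<in> {1, -1} \<Longrightarrow> affine_map c e \<in> Bij UNIV"
proof -
  assume e: "e \<in> {1, -1}"
  have inv: "- e * (- e * c) = c" using e by auto
  have "bij (affine_map c e)"
    using affine_map_inverse[OF e, of c] affine_map_inverse[OF e, of "- e * c", unfolded inv]
    by (intro bij_betw_byWitness[where f' = "affine_map (- e * c) e"]) auto
  then show ?thesis by (simp add: Bij_def)
qed

lemma affine_perms_Bij: "f \<in> affine_perms \<Longrightarrow> f \<in> Bij UNIV"
  unfolding affine_perms_def using affine_map_Bij by auto

lemma BijGroup_mult_affine_map:
  "e \<in> {1, -1} \<Longrightarrow> e' \<in> {1, -1} \<Longrightarrow>
   affine_map c e \<otimes>\<^bsub>BijGroup UNIV\<^esub> affine_map c' e' = affine_map (c + e * c') (e * e')"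
  using affine_map_Bij[of e c] affine_map_Bij[of e' c']
  by (simp add: BijGroup_def compose_def affine_map_def fun_eq_iff algebra_simps)

lemma BijGroup_one_affine_map: "\<one>\<^bsub>BijGroup UNIV\<^esub> = affine_map 0 1"
  by (simp add: BijGroup_def affine_map_def fun_eq_iff)

lemma tau0_eq: "tau0 = affine_map 0 (-1)" by (simp add: tau0_def affine_map_def fun_eq_iff)
lemma tau_half_eq: "tau_half = affine_map 1 (-1)" by (simp add: tau_half_def affine_map_def fun_eq_iff)

lemma BijGroup_inv_affine_map:
  assumes e: "e \<in> {1, -1}"
  shows "inv\<^bsub>BijGroup UNIV\<^esub> (affine_map c e) = affine_map (- e * c) e"
proof -
  have "inv_into UNIV (affine_map c e) x = affine_map (- e * c) e x" for x
    using affine_map_Bij[OF e, of c] affine_map_inverse[OF e]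
    by (intro inv_into_f_eq) (auto simp: Bij_def bij_betw_def)
  then show ?thesis by (simp add: inv_BijGroup[OF affine_map_Bij[OF e]] fun_eq_iff)
qed

lemma generate_tau_subset: "generate (BijGroup UNIV) {tau0, tau_half} \<subseteq> affine_perms"
proof
  fix f assume "f \<in> generate (BijGroup UNIV) {tau0, tau_half}"
  then show "f \<in> affine_perms"
  proof (induction rule: generate.induct)
    case one
    then show ?case by (simp add: BijGroup_one_affine_map)
  next
    case (incl h)
    then show ?case by (auto simp: affine_perms_def tau0_eq tau_half_eq)
  next
    case (inv h)
    then obtain c where "h = affine_map c (-1)" by (auto simp: tau0_eq tau_half_eq)
    then show ?case by (auto simp: affine_perms_def BijGroup_inv_affine_map)
  next
    case (eng h1 h2)
    then obtain c e c' e' where "e \<in> {1, -1}" "e' \<in> {1, -1}" "h1 = affine_map c e" "h2 = affine_map c' e'"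
      by (auto simp: affine_perms_def)
    then show ?case by (auto simp: BijGroup_mult_affine_map)
  qed
qed

lemma affine_perms_subset_generate: "affine_perms \<subseteq> generate (BijGroup UNIV) {tau0, tau_half}"
proof -
  let ?G = "generate (BijGroup (UNIV :: int set)) {tau0, tau_half}"
  have tau: "tau0 \<in> ?G" "tau_half \<in> ?G" by (auto intro: generate.incl)
  have "tau_half \<otimes>\<^bsub>BijGroup UNIV\<^esub> tau0 \<in> ?G" "tau0 \<otimes>\<^bsub>BijGroup UNIV\<^esub> tau_half \<in> ?G"
    using tau by (auto intro: generate.eng)
  then have shift: "affine_map 1 1 \<in> ?G" "affine_map (-1) 1 \<in> ?G"
    by (simp_all add: tau0_eq tau_half_eq BijGroup_mult_affine_map)
  have translation: "affine_map c 1 \<in> ?G" for c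
  proof (induction c rule: int_induct[where k = 0])
    case base
    show ?case using generate.one[of "BijGroup UNIV" "{tau0, tau_half}"] by (simp only: BijGroup_one_affine_map)
  next
    case (step1 c)
    then have "affine_map 1 1 \<otimes>\<^bsub>BijGroup UNIV\<^esub> affine_map c 1 \<in> ?G" using shift by (auto intro: generate.eng)
    then show ?case by (simp add: BijGroup_mult_affine_map add.commute)
  next
    case (step2 c)
    then have "affine_map (-1) 1 \<otimes>\<^bsub>BijGroup UNIV\<^esub> affine_map c 1 \<in> ?G" using shift by (auto intro: generate.eng)
    then show ?case by (simp add: BijGroup_mult_affine_map)
  qed
  have "affine_map c 1 \<otimes>\<^bsub>BijGroup UNIV\<^esub> tau0 \<in> ?G" for c
    using translation tau by (auto intro: generate.eng)
  then have "affine_map c (-1) \<in> ?G" for c by (simp add: tau0_eq BijGroup_mult_affine_map)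
  then show ?thesis using translation by (auto simp: affine_perms_def)
qed

lemma generate_tau_eq: "generate (BijGroup UNIV) {tau0, tau_half} = affine_perms"
  using generate_tau_subset affine_perms_subset_generate by blast

subsection \<open>The isomorphism\<close>

lemma Hauts_Hlinear: "\<phi> \<in> Hauts \<Longrightarrow> Hlinear \<phi>"
  by (simp add: Hauts_def Hlinear_def)

lemma Hauts_closed: "\<phi> \<in> Hauts \<Longrightarrow> x \<in> Hcarrier \<Longrightarrow> \<phi> x \<in> Hcarrier"
  by (auto simp: Hauts_def bij_betw_def)

lemma Hauts_eq_iff: "\<phi> \<in> Hauts \<Longrightarrow> x \<in> Hcarrier \<Longrightarrow> y \<in> Hcarrier \<Longrightarrow> \<phi> x = \<phi> y \<longleftrightarrow> x = y"
  by (auto simp: Hauts_def bij_betw_def inj_on_def)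

lemma Hauts_hmul: "\<phi> \<in> Hauts \<Longrightarrow> x \<in> Hcarrier \<Longrightarrow> y \<in> Hcarrier \<Longrightarrow> \<phi> (hmul x y) = hmul (\<phi> x) (\<phi> y)"
  by (simp add: Hauts_def)

lemma Hauts_surj:
  assumes "\<phi> \<in> Hauts" "y \<in> Hcarrier"
  shows "\<exists>x\<in>Hcarrier. \<phi> x = y"
proof -
  have "y \<in> \<phi> ` Hcarrier" using assms by (simp add: Hauts_def bij_betw_def)
  then show ?thesis by blast
qed

lemma Hauts_eq_zero_iff:
  assumes "\<phi> \<in> Hauts" "x \<in> Hcarrier"
  shows "\<phi> x = 0 \<longleftrightarrow> x = 0"
  using Hauts_eq_iff[OF assms(1,2) Hcarrier_zero] Hlinear_zero[OF Hauts_Hlinear[OF assms(1)]] by simp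

lemma Hauts_idempotent_iff:
  "\<phi> \<in> Hauts \<Longrightarrow> x \<in> Hcarrier \<Longrightarrow> hmul (\<phi> x) (\<phi> x) = \<phi> x \<longleftrightarrow> hmul x x = x"
  by (simp add: Hauts_eq_iff Hauts_hmul[symmetric])

definition aut_perm :: "((hidx \<Rightarrow> 'a::field) \<Rightarrow> hidx \<Rightarrow> 'a) \<Rightarrow> int \<Rightarrow> int" where
  "aut_perm \<phi> i = (THE j. \<phi> (aV i) = aV j)"

lemma aut_perm_eqI: "\<phi> (aV i) = aV j \<Longrightarrow> aut_perm \<phi> i = j"
  by (simp add: aut_perm_def)

lemma aut_perm_induced_aut: "aut_perm (induced_aut c e) = affine_map c e"
  by (simp add: aut_perm_eqI affine_map_def fun_eq_iff)

context
  assumes two: "(2::'a::field) \<noteq> 0" and three: "(3::'a) \<noteq> 0"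
begin

lemma Hauts_aV:
  fixes \<phi> :: "(hidx \<Rightarrow> 'a) \<Rightarrow> hidx \<Rightarrow> 'a"
  assumes \<phi>: "\<phi> \<in> Hauts"
  shows "\<phi> (aV i) = aV (aut_perm \<phi> i)"
proof -
  have "hmul (\<phi> (aV i)) (\<phi> (aV i)) = \<phi> (aV i)" "\<phi> (aV i) \<noteq> 0"
    using \<phi> by (simp_all add: Hauts_idempotent_iff hmul_aV_self[OF two] Hauts_eq_zero_iff)
  then obtain j where "\<phi> (aV i) = aV j"
    using idempotent_cases[OF Hauts_closed[OF \<phi> Hcarrier_aV] _ two three] by auto
  then show ?thesis by (simp add: aut_perm_eqI)
qed

lemma bij_aut_perm:
  fixes \<phi> :: "(hidx \<Rightarrow> 'a) \<Rightarrow> hidx \<Rightarrow> 'a"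
  assumes \<phi>: "\<phi> \<in> Hauts"
  shows "bij (aut_perm \<phi>)"
proof (rule bijI)
  show "inj (aut_perm \<phi>)"
  proof (rule injI)
    fix i i' assume "aut_perm \<phi> i = aut_perm \<phi> i'"
    then have "\<phi> (aV i) = \<phi> (aV i')" by (simp add: Hauts_aV[OF \<phi>])
    then show "i = i'" by (simp add: Hauts_eq_iff[OF \<phi>])
  qed
  have "j \<in> range (aut_perm \<phi>)" for j
  proof -
    obtain y where y: "y \<in> Hcarrier" "\<phi> y = aV j" using Hauts_surj[OF \<phi>, of "aV j"] by auto
    then have "hmul y y = y" "y \<noteq> 0"
      using Hauts_idempotent_iff[OF \<phi> y(1)] Hauts_eq_zero_iff[OF \<phi> y(1)] hmul_aV_self[OF two] by auto
    then obtain i where "y = aV i" using idempotent_cases[OF y(1) _ two three] by auto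
    then show ?thesis using y(2) Hauts_aV[OF \<phi>, of i] by auto
  qed
  then show "surj (aut_perm \<phi>)" by auto
qed

lemma aut_perm_neighbour_distance:
  fixes \<phi> :: "(hidx \<Rightarrow> 'a) \<Rightarrow> hidx \<Rightarrow> 'a"
  assumes \<phi>: "\<phi> \<in> Hauts"
  shows "nd (aut_perm \<phi> i) (aut_perm \<phi> (i + 1)) = nd (aut_perm \<phi> 0) (aut_perm \<phi> 1)"
proof -
  define g where "g = aut_perm \<phi>"
  have image_s1: "\<phi> (sV 1) = sV (nd (g i) (g (i + 1))) + zV (g i) (nd (g i) (g (i + 1)))" for i
  proof -
    have s1: "sV 1 = (hmul (aV i) (aV (i + 1)) - vsc (1/2) (aV i + aV (i + 1)) :: hidx \<Rightarrow> 'a)"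
      using hmul_aV_aV_shift[of 1 i, where 'a = 'a] by (simp add: zV_def pV_eq_0)
    have "\<phi> (sV 1) = hmul (\<phi> (aV i)) (\<phi> (aV (i + 1))) - vsc (1/2) (\<phi> (aV i) + \<phi> (aV (i + 1)))"
      unfolding s1 using Hauts_Hlinear[OF \<phi>]
      by (simp add: Hlinear_diff Hlinear_add Hlinear_vsc Hauts_hmul[OF \<phi>] fun_eq_iff)
    also have "\<dots> = hmul (aV (g i)) (aV (g (i + 1))) - vsc (1/2) (aV (g i) + aV (g (i + 1)))"
      by (simp add: Hauts_aV[OF \<phi>] g_def)
    also have "\<dots> = sV (nd (g i) (g (i + 1))) + zV (g i) (nd (g i) (g (i + 1)))"
      by (simp add: hmul_aV_aV fun_eq_iff)
    finally show ?thesis .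
  qed
  have "inj g" unfolding g_def using bij_aut_perm[OF \<phi>] by (rule bij_is_inj)
  then have "nd (g i) (g (i + 1)) \<noteq> 0" for i using injD[of g i "i + 1"] by (auto simp: nd_def)
  then have "\<phi> (sV 1) (S m) = (if m = nd (g i) (g (i + 1)) then 1 else 0)" for i m
    using image_s1[of i] by simp
  from this[of "nd (g 0) (g 1)" i] this[of "nd (g 0) (g 1)" 0] show ?thesis
    unfolding g_def by (simp split: if_splits)
qed

lemma aut_perm_in_affine_perms:
  fixes \<phi> :: "(hidx \<Rightarrow> 'a) \<Rightarrow> hidx \<Rightarrow> 'a"
  assumes \<phi>: "\<phi> \<in> Hauts"
  shows "aut_perm \<phi> \<in> affine_perms"
proof (rule bij_constant_distance_affine[OF bij_aut_perm[OF \<phi>]])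
  fix i show "\<bar>aut_perm \<phi> (i + 1) - aut_perm \<phi> i\<bar> = int (nd (aut_perm \<phi> 0) (aut_perm \<phi> 1))"
    using aut_perm_neighbour_distance[OF \<phi>, of i] unfolding nd_def by simp
qed

lemma Hauts_eqI:
  fixes \<phi> \<psi> :: "(hidx \<Rightarrow> 'a) \<Rightarrow> hidx \<Rightarrow> 'a"
  assumes \<phi>: "\<phi> \<in> Hauts" and \<psi>: "\<psi> \<in> Hauts" and eq: "aut_perm \<phi> = aut_perm \<psi>"
  shows "\<phi> = \<psi>"
proof (rule extensionalityI)
  show "\<phi> \<in> extensional Hcarrier" "\<psi> \<in> extensional Hcarrier" using \<phi> \<psi> by (simp_all add: Hauts_def)
  define Q where "Q v \<longleftrightarrow> v \<in> Hcarrier \<and> \<phi> v = \<psi> v" for v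
  note lin = Hauts_Hlinear[OF \<phi>] Hauts_Hlinear[OF \<psi>]
  have "Q (evec b)" if "valid_idx b" for b
  proof (rule basis_in_generated_subalgebra[OF three _ _ _ _ _ that])
    show "Q (u + w)" "Q (u - w)" "Q (hmul u w)" if "Q u" "Q w" for u w
      using that unfolding Q_def by (simp_all add: Hlinear_add Hlinear_diff lin Hauts_hmul \<phi> \<psi>)
    show "Q (vsc c u)" if "Q u" for c u
      using that unfolding Q_def by (simp add: Hlinear_vsc lin)
    show "Q (aV i)" for i
      unfolding Q_def using eq by (simp add: Hauts_aV \<phi> \<psi>)
  qed
  then show "\<phi> v = \<psi> v" if "v \<in> Hcarrier" for v
    using Hlinear_eqI[OF Hauts_Hlinear[OF \<phi>] Hauts_Hlinear[OF \<psi>] _ that] by (simp add: Q_def)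
qed

lemma aut_perm_compose:
  fixes \<phi> \<psi> :: "(hidx \<Rightarrow> 'a) \<Rightarrow> hidx \<Rightarrow> 'a"
  assumes \<phi>: "\<phi> \<in> Hauts" and \<psi>: "\<psi> \<in> Hauts"
  shows "aut_perm (compose Hcarrier \<phi> \<psi>) = compose UNIV (aut_perm \<phi>) (aut_perm \<psi>)"
  \<comment> \<open>aV_apply would also rewrite the unapplied aV terms, read as eta-expansions\<close>
  by (rule ext, rule aut_perm_eqI) (simp add: compose_def Hauts_aV \<phi> \<psi> del: aV_apply)

lemma bij_betw_aut_perm: "bij_betw aut_perm (Hauts :: ((hidx \<Rightarrow> 'a) \<Rightarrow> hidx \<Rightarrow> 'a) set) affine_perms"
proof (rule bij_betw_imageI)
  show "inj_on aut_perm (Hauts :: ((hidx \<Rightarrow> 'a) \<Rightarrow> hidx \<Rightarrow> 'a) set)"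
    using Hauts_eqI by (auto simp: inj_on_def)
  show "aut_perm ` (Hauts :: ((hidx \<Rightarrow> 'a) \<Rightarrow> hidx \<Rightarrow> 'a) set) = affine_perms"
  proof
    show "affine_perms \<subseteq> aut_perm ` (Hauts :: ((hidx \<Rightarrow> 'a) \<Rightarrow> hidx \<Rightarrow> 'a) set)"
    proof
      fix f assume "f \<in> affine_perms"
      then obtain c e where "e \<in> {1, -1}" "f = affine_map c e" by (auto simp: affine_perms_def)
      then show "f \<in> aut_perm ` (Hauts :: ((hidx \<Rightarrow> 'a) \<Rightarrow> hidx \<Rightarrow> 'a) set)"
        using image_eqI[where f = aut_perm, OF aut_perm_induced_aut[symmetric, where 'a = 'a, of c e]
            induced_aut_in_Hauts] by simp
    qed
  qed (auto simp: aut_perm_in_affine_perms)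
qed

end

lemma carrier_HAutGroup [simp]: "carrier HAutGroup = Hauts"
  by (simp add: HAutGroup_def BijGroup_def)

lemma mult_HAutGroup: "\<phi> \<in> Hauts \<Longrightarrow> \<psi> \<in> Hauts \<Longrightarrow> \<phi> \<otimes>\<^bsub>HAutGroup\<^esub> \<psi> = compose Hcarrier \<phi> \<psi>"
  by (simp add: HAutGroup_def BijGroup_def Hauts_def Bij_def)

lemma carrier_DGroup [simp]: "carrier DGroup = affine_perms"
  by (simp add: DGroup_def generate_tau_eq)

lemma mult_DGroup: "f \<in> affine_perms \<Longrightarrow> g \<in> affine_perms \<Longrightarrow> f \<otimes>\<^bsub>DGroup\<^esub> g = compose UNIV f g"
  by (simp add: DGroup_def BijGroup_def affine_perms_Bij)

theorem proposition3p7: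
  assumes "(2::'a::field) \<noteq> 0" and "(3::'a) \<noteq> 0"
  shows "(HAutGroup :: ((hidx \<Rightarrow> 'a) \<Rightarrow> (hidx \<Rightarrow> 'a)) monoid) \<cong> DGroup"
proof -
  have "aut_perm \<in> hom (HAutGroup :: ((hidx \<Rightarrow> 'a) \<Rightarrow> (hidx \<Rightarrow> 'a)) monoid) DGroup"
    using assms by (intro homI) (simp_all add: aut_perm_in_affine_perms mult_HAutGroup mult_DGroup
        aut_perm_compose)
  moreover have "bij_betw aut_perm (Hauts :: ((hidx \<Rightarrow> 'a) \<Rightarrow> hidx \<Rightarrow> 'a) set) affine_perms"
    using assms by (rule bij_betw_aut_perm)
  ultimately show ?thesis unfolding is_iso_def iso_def by auto
qed

end
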